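(* Let $\mathbb{H}$ be the real quaternion algebra and let $p\in\mathbb{R}[x]$ be a nonconstant polynomial. Then every element of $\mathbb{H}$ can be expressed as a product $xy$ of two elements $x,y\in p[\mathbb{H},\mathbb{H}]=\{p(ab)-p(ba)\mid a,b\in\mathbb{H}\}$. *)

theory Defs
  imports Complex_Main "HOL-Computational_Algebra.Polynomial"
begin

text \<open>The real quaternion algebra H, with basis 1, i, j, k and
  i^2 = j^2 = k^2 = ijk = -1.\<close>

datatype quat = Quat (qr: real) (qi: real) (qj: real) (qk: real)

lemma quat_eqI: "qr a = qr b \<Longrightarrow> qi a = qi b \<Longrightarrow> qj a = qj b \<Longrightarrow> qk a = qk b \<Longrightarrow> a = b"
  by (cases a; cases b) auto

instantiation quat :: real_algebra_1
begin

definition "0 = Quat 0 0 0 0"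
definition "1 = Quat 1 0 0 0"
definition "a + b = Quat (qr a + qr b) (qi a + qi b) (qj a + qj b) (qk a + qk b)"
definition "a - b = Quat (qr a - qr b) (qi a - qi b) (qj a - qj b) (qk a - qk b)"
definition "- a = Quat (- qr a) (- qi a) (- qj a) (- qk a)"
definition "scaleR r a = Quat (r * qr a) (r * qi a) (r * qj a) (r * qk a)"
definition "a * b = Quat
   (qr a * qr b - qi a * qi b - qj a * qj b - qk a * qk b)
   (qr a * qi b + qi a * qr b + qj a * qk b - qk a * qj b)
   (qr a * qj b - qi a * qk b + qj a * qr b + qk a * qi b)
   (qr a * qk b + qi a * qj b - qj a * qi b + qk a * qr b)"

instance
  by standard
    (auto simp: zero_quat_def one_quat_def plus_quat_def minus_quat_def
       uminus_quat_def scaleR_quat_def times_quat_def algebra_simps intro!: quat_eqI)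

end

definition qpoly :: "real poly \<Rightarrow> quat \<Rightarrow> quat" where
  "qpoly p a = (\<Sum>i\<le>degree p. coeff p i *\<^sub>R a ^ i)"

definition poly_commutators :: "real poly \<Rightarrow> quat set" where
  "poly_commutators p = {qpoly p (a * b) - qpoly p (b * a) | a b. True}"

end

theory Submission
  imports Defs
begin

text \<open>Every quaternion is a product of two pure quaternions, so it suffices to show that
  every pure quaternion \<open>u = r e\<close> with \<open>e\<^sup>2 = -1\<close> lies in \<open>p[\<bbbH>,\<bbbH>]\<close>. Take a pure \<open>f\<close> with
  \<open>f\<^sup>2 = -1\<close> anticommuting with \<open>e\<close>. Then \<open>\<real> + \<real> e\<close> is a copy of \<open>\<complex>\<close>, and conjugation by \<open>f\<close>
  induces complex conjugation on it; hence for \<open>a = f\<close> and \<open>b = -f w\<close> (with \<open>w \<in> \<real> + \<real> e\<close>)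
  we get \<open>ab = w\<close>, \<open>ba = w\<^sup>*\<close> and \<open>p(ab) - p(ba) = 2 Im p(w) e\<close>. Finally, \<open>Im p\<close> is surjective
  on \<open>\<complex>\<close> for nonconstant real \<open>p\<close>, as it is unbounded along a suitable ray and odd under
  conjugation.\<close>

lemma quat_component_simps [simp]:
  "qr (a * b) = qr a * qr b - qi a * qi b - qj a * qj b - qk a * qk b"
  "qi (a * b) = qr a * qi b + qi a * qr b + qj a * qk b - qk a * qj b"
  "qj (a * b) = qr a * qj b - qi a * qk b + qj a * qr b + qk a * qi b"
  "qk (a * b) = qr a * qk b + qi a * qj b - qj a * qi b + qk a * qr b"
  "qr (a + b) = qr a + qr b" "qi (a + b) = qi a + qi b"
  "qj (a + b) = qj a + qj b" "qk (a + b) = qk a + qk b"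
  "qr (a - b) = qr a - qr b" "qi (a - b) = qi a - qi b"
  "qj (a - b) = qj a - qj b" "qk (a - b) = qk a - qk b"
  "qr (- a) = - qr a" "qi (- a) = - qi a" "qj (- a) = - qj a" "qk (- a) = - qk a"
  "qr (r *\<^sub>R a) = r * qr a" "qi (r *\<^sub>R a) = r * qi a"
  "qj (r *\<^sub>R a) = r * qj a" "qk (r *\<^sub>R a) = r * qk a"
  "qr 0 = 0" "qi 0 = 0" "qj 0 = 0" "qk 0 = 0"
  "qr 1 = 1" "qi 1 = 0" "qj 1 = 0" "qk 1 = 0"
  by (simp_all add: times_quat_def plus_quat_def minus_quat_def uminus_quat_def
      scaleR_quat_def zero_quat_def one_quat_def)

lemma pure_quat_square:
  "qr u = 0 \<Longrightarrow> u * u = - (((qi u)\<^sup>2 + (qj u)\<^sup>2 + (qk u)\<^sup>2) *\<^sub>R 1)"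
  by (intro quat_eqI) (simp_all add: power2_eq_square)

lemma pure_quat_anticommute:
  assumes "qr x = 0" "qr y = 0" "qr (x * y) = 0"
  shows "y * x = - (x * y)"
  using assms by (intro quat_eqI) (simp_all add: algebra_simps)

lemma pure_quat_polar:
  assumes "qr u = 0"
  obtains r e where "qr e = 0" "e * e = -1" "u = r *\<^sub>R e"
proof (cases "u = 0")
  case True
  show ?thesis
    by (rule that[of "Quat 0 1 0 0" 0]) (auto simp: True intro!: quat_eqI)
next
  case False
  define r where "r = sqrt ((qi u)\<^sup>2 + (qj u)\<^sup>2 + (qk u)\<^sup>2)"
  have "(qi u)\<^sup>2 + (qj u)\<^sup>2 + (qk u)\<^sup>2 \<noteq> 0"
    using False assms by (auto simp: add_nonneg_eq_0_iff intro: quat_eqI)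
  then have "(qi u)\<^sup>2 + (qj u)\<^sup>2 + (qk u)\<^sup>2 > 0"
    by (simp add: order_less_le)
  then have r2: "r\<^sup>2 = (qi u)\<^sup>2 + (qj u)\<^sup>2 + (qk u)\<^sup>2" and "r > 0"
    by (simp_all add: r_def)
  define e where "e = (1 / r) *\<^sub>R u"
  have "qr e = 0"
    using assms by (simp add: e_def)
  moreover have "e * e = -1"
  proof -
    have "(qi e)\<^sup>2 + (qj e)\<^sup>2 + (qk e)\<^sup>2 = ((qi u)\<^sup>2 + (qj u)\<^sup>2 + (qk u)\<^sup>2) / r\<^sup>2"
      by (simp add: e_def power_divide add_divide_distrib)
    also have "\<dots> = 1"
      using \<open>r > 0\<close> by (simp flip: r2)
    finally show ?thesis
      using pure_quat_square[OF \<open>qr e = 0\<close>] by simp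
  qed
  moreover have "u = r *\<^sub>R e"
    using \<open>r > 0\<close> by (simp add: e_def)
  ultimately show ?thesis
    by (rule that)
qed

lemma ex_imaginary_unit_orthogonal:
  obtains f where "qr f = 0" "f * f = -1" "qr (f * q) = 0"
proof (cases "qi q = 0 \<and> qj q = 0")
  case True
  show ?thesis
    by (rule that[of "Quat 0 1 0 0"]) (auto simp: True intro!: quat_eqI)
next
  case False
  define r where "r = sqrt ((qi q)\<^sup>2 + (qj q)\<^sup>2)"
  have pos: "(qi q)\<^sup>2 + (qj q)\<^sup>2 > 0"
    using False by (simp add: sum_power2_gt_zero_iff)
  then have r2: "r\<^sup>2 = (qi q)\<^sup>2 + (qj q)\<^sup>2" and "r > 0"
    by (simp_all add: r_def)
  show ?thesis
  proof (rule that[of "Quat 0 (- qj q / r) (qi q / r) 0"])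
    show "Quat 0 (- qj q / r) (qi q / r) 0 * Quat 0 (- qj q / r) (qi q / r) 0 = -1"
      using \<open>r > 0\<close> False
      by (intro quat_eqI) (simp_all add: divide_simps power2_eq_square r2[unfolded power2_eq_square])
  qed (use \<open>r > 0\<close> in \<open>simp_all add: field_simps\<close>)
qed

lemma quat_eq_mult_of_pure:
  obtains x y where "qr x = 0" "qr y = 0" "q = x * y"
proof -
  obtain f where "qr f = 0" "f * f = -1" "qr (f * q) = 0"
    by (rule ex_imaginary_unit_orthogonal)
  moreover from \<open>f * f = -1\<close> have "q = f * - (f * q)"
    by (simp flip: mult.assoc)
  ultimately show ?thesis
    by (intro that[of f "- (f * q)"]) simp_all
qed

definition complex_embed :: "'a::real_algebra_1 \<Rightarrow> complex \<Rightarrow> 'a" where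
  "complex_embed e w = Re w *\<^sub>R 1 + Im w *\<^sub>R e"

lemma complex_embed_0 [simp]: "complex_embed e 0 = 0"
  and complex_embed_1 [simp]: "complex_embed e 1 = 1"
  and complex_embed_add: "complex_embed e (v + w) = complex_embed e v + complex_embed e w"
  and complex_embed_of_real_mult: "complex_embed e (of_real r * w) = r *\<^sub>R complex_embed e w"
  by (simp_all add: complex_embed_def algebra_simps)

lemma complex_embed_mult:
  assumes "e * e = -1"
  shows "complex_embed e (v * w) = complex_embed e v * complex_embed e w"
proof -
  have "complex_embed e v * complex_embed e w
      = (Re v * Re w) *\<^sub>R 1 + (Re v * Im w + Im v * Re w) *\<^sub>R e + (Im v * Im w) *\<^sub>R (e * e)"
    by (simp add: complex_embed_def algebra_simps)
  then show ?thesis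
    using assms by (simp add: complex_embed_def algebra_simps)
qed

lemma complex_embed_power:
  "e * e = -1 \<Longrightarrow> complex_embed e (w ^ n) = complex_embed e w ^ n"
  by (induction n) (simp_all add: complex_embed_mult)

lemma complex_embed_sum: "complex_embed e (sum f A) = (\<Sum>x\<in>A. complex_embed e (f x))"
  by (induction A rule: infinite_finite_induct) (simp_all add: complex_embed_add)

lemma complex_embed_minus_cnj: "complex_embed e w - complex_embed e (cnj w) = (2 * Im w) *\<^sub>R e"
  by (simp add: complex_embed_def algebra_simps flip: scaleR_2)

lemma conjugate_complex_embed:
  assumes "f * f = -1" and "f * e = - (e * f)"
  shows "f * complex_embed e w * f = - complex_embed e (cnj w)"
proof -
  have "f * e * f = - (e * (f * f))"
    using assms(2) by (simp add: mult.assoc)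
  also have "\<dots> = e"
    using assms(1) by simp
  finally have "f * e * f = e" .
  then show ?thesis
    using assms(1) by (simp add: complex_embed_def algebra_simps)
qed

lemma qpoly_complex_embed:
  assumes "e * e = -1"
  shows "qpoly p (complex_embed e w) = complex_embed e (poly (map_poly of_real p) w)"
  by (simp add: qpoly_def poly_altdef complex_embed_sum coeff_map_poly degree_map_poly
      complex_embed_of_real_mult complex_embed_power[OF assms])

lemma scaleR_Im_poly_in_poly_commutators:
  assumes "e * e = -1" "f * f = -1" "f * e = - (e * f)"
  shows "(2 * Im (poly (map_poly of_real p) w)) *\<^sub>R e \<in> poly_commutators p"
proof -
  let ?P = "map_poly of_real p :: complex poly"
  let ?a = f and ?b = "- (f * complex_embed e w)"
  have "?a * ?b = complex_embed e w"
    using assms(2) by (simp flip: mult.assoc)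
  moreover have "?b * ?a = complex_embed e (cnj w)"
    using conjugate_complex_embed[OF assms(2,3)] by simp
  ultimately have "qpoly p (?a * ?b) - qpoly p (?b * ?a)
      = complex_embed e (poly ?P w) - complex_embed e (cnj (poly ?P w))"
    by (simp add: qpoly_complex_embed[OF assms(1)] poly_cnj_real coeff_map_poly)
  also have "\<dots> = (2 * Im (poly ?P w)) *\<^sub>R e"
    by (rule complex_embed_minus_cnj)
  finally have "(2 * Im (poly ?P w)) *\<^sub>R e = qpoly p (?a * ?b) - qpoly p (?b * ?a)"
    by (rule sym)
  then show ?thesis
    unfolding poly_commutators_def by blast
qed

lemma Im_poly_tendsto_at_top_along_ray:
  fixes p :: "real poly"
  assumes "degree p \<ge> 1"
  obtains z where "filterlim (\<lambda>s. Im (poly (map_poly of_real p) (of_real s * z))) at_top at_top"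
proof -
  define P where "P = (map_poly of_real p :: complex poly)"
  define n where "n = degree p"
  define c where "c = lead_coeff p"
  have "n > 0" "c \<noteq> 0"
    using assms by (auto simp: n_def c_def)
  txt \<open>Choose \<open>z\<close> with \<open>c z\<^sup>n = \<i> \<bar>c\<bar>\<close>, so that \<open>Im P(s z) \<sim> \<bar>c\<bar> s\<^sup>n\<close>.\<close>
  define z where "z = cis (sgn c * pi / (2 * n))"
  have "z ^ n = cis (sgn c * pi / 2)"
    using \<open>n > 0\<close> by (simp add: z_def DeMoivre)
  then have czn: "of_real c * z ^ n = \<i> * of_real \<bar>c\<bar>"
    using \<open>c \<noteq> 0\<close> by (cases "c > 0") (simp_all add: complex_eq_iff)
  have "((\<lambda>x. poly P x / x ^ n) \<longlongrightarrow> of_real c) at_infinity"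
    using poly_divide_tendsto_aux[of P]
    by (simp add: P_def n_def c_def degree_map_poly coeff_map_poly)
  moreover have "filterlim (\<lambda>s. of_real s * z) at_infinity at_top"
    unfolding filterlim_at_infinity_conv_norm_at_top
    by (simp add: norm_mult z_def filterlim_abs_real)
  ultimately have "((\<lambda>s. poly P (of_real s * z) / (of_real s * z) ^ n) \<longlongrightarrow> of_real c) at_top"
    by (rule filterlim_compose)
  then have "((\<lambda>s. Im (poly P (of_real s * z) / (of_real s * z) ^ n * z ^ n))
      \<longlongrightarrow> Im (of_real c * z ^ n)) at_top"
    by (intro tendsto_intros)
  moreover have "poly P (of_real s * z) / (of_real s * z) ^ n * z ^ n
      = poly P (of_real s * z) / of_real (s ^ n)" for s
    by (simp add: power_mult_distrib z_def)
  ultimately have "((\<lambda>s. Im (poly P (of_real s * z)) / s ^ n) \<longlongrightarrow> \<bar>c\<bar>) at_top"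
    by (simp add: czn Im_divide_of_real)
  moreover have "filterlim (\<lambda>s::real. s ^ n) at_top at_top"
    using \<open>n > 0\<close> by (intro filterlim_pow_at_top filterlim_ident)
  ultimately have "filterlim (\<lambda>s. Im (poly P (of_real s * z)) / s ^ n * s ^ n) at_top at_top"
    using \<open>c \<noteq> 0\<close> by (intro filterlim_tendsto_pos_mult_at_top) auto
  moreover have "\<forall>\<^sub>F s in at_top.
      Im (poly P (of_real s * z)) / s ^ n * s ^ n = Im (poly P (of_real s * z))"
    using eventually_gt_at_top[of 0] by eventually_elim simp
  ultimately show ?thesis
    using that[of z] by (simp add: P_def filterlim_cong)
qed

lemma surj_Im_poly_of_real:
  fixes p :: "real poly"
  assumes "degree p \<ge> 1"
  shows "surj (\<lambda>w. Im (poly (map_poly of_real p) w))"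
proof -
  define P where "P = (map_poly of_real p :: complex poly)"
  have Im_P_cnj: "Im (poly P (cnj w)) = - Im (poly P w)" for w
    by (simp add: P_def coeff_map_poly flip: poly_cnj_real)
  have nonneg: "\<exists>w. Im (poly P w) = t" if "t \<ge> 0" for t
  proof -
    obtain z where "filterlim (\<lambda>s. Im (poly P (of_real s * z))) at_top at_top"
      using Im_poly_tendsto_at_top_along_ray[OF assms] unfolding P_def by blast
    then have "\<forall>\<^sub>F s in at_top. s \<ge> 0 \<and> Im (poly P (of_real s * z)) \<ge> t"
      by (intro eventually_conj eventually_ge_at_top) (simp add: filterlim_at_top)
    then obtain S where "S \<ge> 0" "Im (poly P (of_real S * z)) \<ge> t"
      unfolding eventually_at_top_linorder by blast
    moreover have "Im (poly P (of_real 0 * z)) = 0"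
      by (simp add: P_def poly_0_coeff_0 coeff_map_poly)
    moreover have "continuous_on {0..S} (\<lambda>s. Im (poly P (of_real s * z)))"
      by (intro continuous_intros)
    ultimately obtain s where "Im (poly P (of_real s * z)) = t"
      using IVT'[of "\<lambda>s. Im (poly P (of_real s * z))" 0 t S] \<open>t \<ge> 0\<close> by auto
    then show ?thesis ..
  qed
  have "\<exists>w. Im (poly P w) = t" for t
  proof (cases "t \<ge> 0")
    case False
    then obtain w where "Im (poly P w) = - t"
      using nonneg[of "- t"] by auto
    then have "Im (poly P (cnj w)) = t"
      by (simp add: Im_P_cnj)
    then show ?thesis ..
  qed (rule nonneg)
  then show ?thesis
    unfolding P_def by (metis surjI)
qed

lemma pure_quat_in_poly_commutators:
  fixes p :: "real poly"
  assumes "degree p \<ge> 1" and "qr u = 0"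
  shows "u \<in> poly_commutators p"
proof -
  obtain r e where e: "qr e = 0" "e * e = -1" and u: "u = r *\<^sub>R e"
    using pure_quat_polar[OF assms(2)] .
  obtain f where f: "qr f = 0" "f * f = -1" "qr (f * e) = 0"
    by (rule ex_imaginary_unit_orthogonal)
  have "f * e = - (e * f)"
    using pure_quat_anticommute[OF f(1) e(1) f(3)] by simp
  obtain w where "Im (poly (map_poly of_real p) w) = r / 2"
    using surj_Im_poly_of_real[OF assms(1)] by (metis surjD)
  with scaleR_Im_poly_in_poly_commutators[OF e(2) f(2) \<open>f * e = - (e * f)\<close>, of p w]
  show ?thesis
    by (simp add: u)
qed

theorem theorem2p14:
  fixes p :: "real poly"
  assumes "degree p \<ge> 1"
  shows "\<forall>q :: quat. \<exists>x y. x \<in> poly_commutators p \<and> y \<in> poly_commutators p \<and> q = x * y"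
proof
  fix q :: quat
  obtain x y where "qr x = 0" "qr y = 0" "q = x * y"
    by (rule quat_eq_mult_of_pure)
  then show "\<exists>x y. x \<in> poly_commutators p \<and> y \<in> poly_commutators p \<and> q = x * y"
    using pure_quat_in_poly_commutators[OF assms] by blast
qed

end
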